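(* Consider the SSBM in the context, let $\tau^+>0$, $\tau^-\ge0$, and assume $d_i^\pm>0$ for all $i\in[k]$. Let $V^\perp\in\mathbb R^{n\times(n-k)}$ have orthonormal columns spanning the orthogonal complement of the column span of $\Theta$, chosen so that exactly $n_i-1$ of its columns are supported on $C_i$ for each $i$ (these are eigenvectors of $\mathbb E D^+$), with the columns ordered cluster by cluster. Then $$\bar T=\begin{bmatrix}\Theta R& V^\perp\end{bmatrix}\begin{bmatrix}\Lambda\\&\frac{\alpha_1^+}{\alpha_1^-}I_{n_1-1}\\&&\ddots\\&&&\frac{\alpha_k^+}{\alpha_k^-}I_{n_k-1}\end{bmatrix}\begin{bmatrix}(\Theta R)^\top\\(V^\perp)^\top\end{bmatrix},$$ where $R$ is a $k\times k$ rotation matrix and $\Lambda$ a diagonal matrix such that $(C^-)^{-1/2}C^+(C^-)^{-1/2}=R\Lambda R^\top$.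
   Context: SSBM: integers $n\ge2,k\ge2$, $p\in(0,1]$, $\eta\in[0,1/2)$, partition of $[n]$ into nonempty clusters $C_1,\dots,C_k$, $|C_i|=n_i$. Independently for each pair $j\ne j'$ an edge is present w.p. $p$, signed $+1$ if same cluster and $-1$ otherwise, then flipped independently w.p. $\eta$. $A^+,A^-$ are the 0/1 adjacency matrices of positive and negative edges, $D^\pm=\mathrm{diag}(A^\pm\mathbf1)$. $\Theta_{ji}=1/\sqrt{n_i}$ if $j\in C_i$ else 0. $\overline{L^\pm_{sym}}=I-(\mathbb ED^\pm)^{-1/2}\mathbb EA^\pm(\mathbb ED^\pm)^{-1/2}$, $\bar T=(\overline{L^-_{sym}}+\tau^+I)^{-1/2}(\overline{L^+_{sym}}+\tau^-I)(\overline{L^-_{sym}}+\tau^+I)^{-1/2}$. Expected degrees of a node in $C_i$: $d_i^+=p(n(s_i(1-2\eta)+\eta)-(1-\eta))$, $d_i^-=p(n(-s_i(1-2\eta)+(1-\eta))-\eta)$ with $s_i=n_i/n$. $u^\pm=(\sqrt{n_1/d_1^\pm},\dots,\sqrt{n_k/d_k^\pm})^\top$, $\alpha_i^+=1+\tau^-+p(1-\eta)/d_i^+$, $\alpha_i^-=1+\tau^++p\eta/d_i^-$. $C^+=-p\eta u^+(u^+)^\top+\mathrm{diag}_i\big(1+\tau^-+\frac{p}{d_i^+}(1-\eta-n_i(1-2\eta))\big)$, $C^-=-p(1-\eta)u^-(u^-)^\top+\mathrm{diag}_i\big(1+\tau^++\frac p{d_i^-}(\eta+n_i(1-2\eta))\big)$.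 *)

theory Defs
  imports "HOL-Analysis.Analysis"
begin

text \<open>Clusters are given by a labelling c :: 'n => 'k of the nodes; C_i = {j. c j = i}.\<close>

definition csize :: "('n::finite \<Rightarrow> 'k) \<Rightarrow> 'k \<Rightarrow> nat" where
  "csize c i = card {j. c j = i}"

definition Theta :: "('n::finite \<Rightarrow> 'k::finite) \<Rightarrow> real^'k^'n" where
  "Theta c = (\<chi> j i. if c j = i then 1 / sqrt (real (csize c i)) else 0)"

definition EAp :: "real \<Rightarrow> real \<Rightarrow> ('n::finite \<Rightarrow> 'k) \<Rightarrow> real^'n^'n" where
  "EAp p \<eta> c = (\<chi> j j'. if j = j' then 0 else if c j = c j' then p * (1 - \<eta>) else p * \<eta>)"

definition EAm :: "real \<Rightarrow> real \<Rightarrow> ('n::finite \<Rightarrow> 'k) \<Rightarrow> real^'n^'n" where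
  "EAm p \<eta> c = (\<chi> j j'. if j = j' then 0 else if c j = c j' then p * \<eta> else p * (1 - \<eta>))"

definition degmat :: "real^'n^'n \<Rightarrow> real^'n^'n" where
  "degmat A = (\<chi> j j'. if j = j' then (\<Sum>l\<in>UNIV. A $ j $ l) else 0)"

definition psd_mat :: "real^'n^'n \<Rightarrow> bool" where
  "psd_mat S \<longleftrightarrow> (\<forall>x. 0 \<le> x \<bullet> (S *v x))"

definition msqrt :: "real^'n^'n \<Rightarrow> real^'n^'n" where
  "msqrt M = (THE S. transpose S = S \<and> psd_mat S \<and> S ** S = M)"

definition misqrt :: "real^'n^'n \<Rightarrow> real^'n^'n" where
  "misqrt M = matrix_inv (msqrt M)"

definition Lsym :: "real^'n^'n \<Rightarrow> real^'n^'n" where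
  "Lsym A = mat 1 - misqrt (degmat A) ** A ** misqrt (degmat A)"

definition Tbar :: "real \<Rightarrow> real \<Rightarrow> real \<Rightarrow> real \<Rightarrow> ('n::finite \<Rightarrow> 'k) \<Rightarrow> real^'n^'n" where
  "Tbar p \<eta> \<tau>p \<tau>m c =
     misqrt (Lsym (EAm p \<eta> c) + \<tau>p *\<^sub>R mat 1) ** (Lsym (EAp p \<eta> c) + \<tau>m *\<^sub>R mat 1)
       ** misqrt (Lsym (EAm p \<eta> c) + \<tau>p *\<^sub>R mat 1)"

definition sfrac :: "('n::finite \<Rightarrow> 'k) \<Rightarrow> 'k \<Rightarrow> real" where
  "sfrac c i = real (csize c i) / real CARD('n)"

definition dplus :: "real \<Rightarrow> real \<Rightarrow> ('n::finite \<Rightarrow> 'k) \<Rightarrow> 'k \<Rightarrow> real" where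
  "dplus p \<eta> c i = p * (real CARD('n) * (sfrac c i * (1 - 2*\<eta>) + \<eta>) - (1 - \<eta>))"

definition dminus :: "real \<Rightarrow> real \<Rightarrow> ('n::finite \<Rightarrow> 'k) \<Rightarrow> 'k \<Rightarrow> real" where
  "dminus p \<eta> c i = p * (real CARD('n) * (- sfrac c i * (1 - 2*\<eta>) + (1 - \<eta>)) - \<eta>)"

definition uplus :: "real \<Rightarrow> real \<Rightarrow> ('n::finite \<Rightarrow> 'k::finite) \<Rightarrow> real^'k" where
  "uplus p \<eta> c = (\<chi> i. sqrt (real (csize c i) / dplus p \<eta> c i))"

definition uminus :: "real \<Rightarrow> real \<Rightarrow> ('n::finite \<Rightarrow> 'k::finite) \<Rightarrow> real^'k" where
  "uminus p \<eta> c = (\<chi> i. sqrt (real (csize c i) / dminus p \<eta> c i))"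

definition alphap :: "real \<Rightarrow> real \<Rightarrow> real \<Rightarrow> ('n::finite \<Rightarrow> 'k) \<Rightarrow> 'k \<Rightarrow> real" where
  "alphap p \<eta> \<tau>m c i = 1 + \<tau>m + p * (1 - \<eta>) / dplus p \<eta> c i"

definition alpham :: "real \<Rightarrow> real \<Rightarrow> real \<Rightarrow> ('n::finite \<Rightarrow> 'k) \<Rightarrow> 'k \<Rightarrow> real" where
  "alpham p \<eta> \<tau>p c i = 1 + \<tau>p + p * \<eta> / dminus p \<eta> c i"

definition outer :: "real^'a \<Rightarrow> real^'b \<Rightarrow> real^'b^'a" where
  "outer x y = (\<chi> i j. x $ i * y $ j)"

definition Cplus :: "real \<Rightarrow> real \<Rightarrow> real \<Rightarrow> ('n::finite \<Rightarrow> 'k::finite) \<Rightarrow> real^'k^'k" where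
  "Cplus p \<eta> \<tau>m c =
     - (p * \<eta>) *\<^sub>R outer (uplus p \<eta> c) (uplus p \<eta> c)
     + (\<chi> i i'. if i = i' then 1 + \<tau>m + p / dplus p \<eta> c i * (1 - \<eta> - real (csize c i) * (1 - 2*\<eta>)) else 0)"

definition Cminus :: "real \<Rightarrow> real \<Rightarrow> real \<Rightarrow> ('n::finite \<Rightarrow> 'k::finite) \<Rightarrow> real^'k^'k" where
  "Cminus p \<eta> \<tau>p c =
     - (p * (1 - \<eta>)) *\<^sub>R outer (uminus p \<eta> c) (uminus p \<eta> c)
     + (\<chi> i i'. if i = i' then 1 + \<tau>p + p / dminus p \<eta> c i * (\<eta> + real (csize c i) * (1 - 2*\<eta>)) else 0)"

end

theory Submission
  imports Defs
begin

text \<open>Since the expected adjacency matrices are constant on each pair of clusters (off the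
  diagonal), both shifted Laplacians are block matrices
  \<open>block X f = [\<Theta> V\<^sup>\<bottom>] diag(X, f\<^sub>1 I, \<dots>, f\<^sub>k I) [\<Theta> V\<^sup>\<bottom>]\<^sup>T\<close> with cores \<open>X = C\<^sup>\<plusminus>\<close>
  and weights \<open>f = \<alpha>\<^sup>\<plusminus>\<close>. Because \<open>[\<Theta> V\<^sup>\<bottom>]\<close> is orthogonal, such matrices multiply
  blockwise; by uniqueness of positive semidefinite square roots (which rests on the spectral
  theorem) square roots and inverses are also taken blockwise. The core \<open>C\<^sup>-\<close> is invertible
  because it is the compression \<open>\<Theta>\<^sup>T (L\<^sup>-\<^sub>s\<^sub>y\<^sub>m + \<tau>\<^sup>+ I) \<Theta> \<succeq> \<tau>\<^sup>+ I\<close>. Hence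
  \<open>Tbar\<close> is the block matrix with core \<open>(C\<^sup>-)\<^sup>-\<^sup>1\<^sup>/\<^sup>2 C\<^sup>+ (C\<^sup>-)\<^sup>-\<^sup>1\<^sup>/\<^sup>2 = R \<Lambda> R\<^sup>T\<close> and
  weights \<open>\<alpha>\<^sup>+/\<alpha>\<^sup>-\<close>.\<close>

lemma inner_matrix_vector_transpose:
  "(x::real^'m) \<bullet> ((A::real^'n^'m) *v y) = (transpose A *v x) \<bullet> y"
  by (metis dot_lmul_matrix transpose_matrix_vector)

lemma matrix_vector_mult_sum: "(M::real^'n^'m) *v (\<Sum>i\<in>I. x i) = (\<Sum>i\<in>I. M *v x i)"
  by (induct I rule: infinite_finite_induct) (auto simp: matrix_vector_right_distrib)

lemma sum_matrix_vector_mult: "(\<Sum>i\<in>I. M i) *v (x::real^'n) = (\<Sum>i\<in>I. M i *v x)"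
  by (induct I rule: infinite_finite_induct) (auto simp: matrix_vector_mult_add_rdistrib)

lemma outer_matrix_vector_mult: "outer a b *v x = (b \<bullet> x) *\<^sub>R a"
  by (simp add: vec_eq_iff outer_def matrix_vector_mult_def inner_vec_def sum_distrib_left mult_ac)

lemma inner_sum_orthonormal:
  fixes B :: "(real^'n) set"
  assumes "finite B" "b' \<in> B" "\<forall>b\<in>B. norm b = 1" "\<forall>b\<in>B. \<forall>b'\<in>B. b \<noteq> b' \<longrightarrow> b \<bullet> b' = 0"
  shows "b' \<bullet> (\<Sum>b\<in>B. a b *\<^sub>R b) = a b'"
proof -
  have "b' \<bullet> (\<Sum>b\<in>B. a b *\<^sub>R b) = (\<Sum>b\<in>B. if b = b' then a b else 0)"
    unfolding inner_sum_right using assms by (intro sum.cong) (auto simp: norm_eq_1)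
  also have "\<dots> = a b'" using assms by (simp add: sum.delta')
  finally show ?thesis .
qed

lemma inner_symmetric_matrix:
  assumes "transpose A = A"
  shows "x \<bullet> (A *v y) = (A *v x) \<bullet> (y::real^'n)"
  using inner_matrix_vector_transpose[of x A y] assms by simp

lemma quadratic_nonpos_imp_linear_coeff_zero:
  fixes b c :: real
  assumes "\<And>t. 2 * t * b + t\<^sup>2 * c \<le> 0"
  shows "b = 0"
proof (rule ccontr)
  assume "b \<noteq> 0"
  define t where "t = b / (\<bar>c\<bar> + 1)"
  have tb: "t * b > 0" using \<open>b \<noteq> 0\<close> by (simp add: t_def power2_eq_square[symmetric] add_pos_nonneg)
  have "t\<^sup>2 * \<bar>c\<bar> = t * b * (\<bar>c\<bar> / (\<bar>c\<bar> + 1))" by (simp add: t_def power2_eq_square field_simps)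
  also have "\<dots> < t * b" using tb by (simp add: field_simps)
  moreover have "- (t\<^sup>2 * c) \<le> t\<^sup>2 * \<bar>c\<bar>" using mult_left_mono[of "- c" "\<bar>c\<bar>" "t\<^sup>2"] by simp
  ultimately show False using assms[of t] tb by linarith
qed

text \<open>A maximiser of the Rayleigh quotient on the unit sphere of an invariant subspace is an
  eigenvector: perturbing it along an orthogonal direction of the subspace must not increase
  the quotient to first order.\<close>

lemma symmetric_matrix_eigenvector_in_subspace:
  fixes A :: "real^'n^'n"
  assumes symA: "transpose A = A" and W: "subspace W" "W \<noteq> {0}" and inv: "\<And>x. x \<in> W \<Longrightarrow> A *v x \<in> W"
  obtains x where "x \<in> W" "norm x = 1" "A *v x = (x \<bullet> (A *v x)) *\<^sub>R x"
proof -
  define K where "K = W \<inter> sphere 0 1"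
  have "compact K" unfolding K_def
    using W(1) closed_subspace compact_Int_closed inf_commute closed_Int_compact by (metis compact_sphere)
  obtain w where w: "w \<in> W" "w \<noteq> 0" using W subspace_0 by blast
  then have "w /\<^sub>R norm w \<in> K" unfolding K_def using W(1) by (simp add: subspace_scale)
  moreover have "continuous_on K (\<lambda>x. x \<bullet> (A *v x))" by (intro continuous_intros)
  ultimately obtain x0 where x0K: "x0 \<in> K" and max: "\<And>y. y \<in> K \<Longrightarrow> y \<bullet> (A *v y) \<le> x0 \<bullet> (A *v x0)"
    using continuous_attains_sup[OF \<open>compact K\<close>] by blast
  define l where "l = x0 \<bullet> (A *v x0)"
  have x0W: "x0 \<in> W" and x0x0: "x0 \<bullet> x0 = 1" using x0K unfolding K_def by (auto simp: norm_eq_1)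
  define y where "y = A *v x0 - l *\<^sub>R x0"
  have yW: "y \<in> W" unfolding y_def using W(1) inv x0W by (simp add: subspace_diff subspace_scale)
  have yx0: "y \<bullet> x0 = 0"
    unfolding y_def l_def using x0x0 by (simp add: inner_diff_left inner_diff_right inner_commute)
  have "2 * t * (y \<bullet> (A *v x0)) + t\<^sup>2 * (y \<bullet> (A *v y) - l * (y \<bullet> y)) \<le> 0" for t
  proof -
    define z where "z = x0 + t *\<^sub>R y"
    have zW: "z \<in> W" unfolding z_def using W(1) x0W yW by (simp add: subspace_add subspace_scale)
    have zz: "z \<bullet> z = 1 + t\<^sup>2 * (y \<bullet> y)" unfolding z_def
      using x0x0 yx0 by (simp add: inner_add_left inner_add_right inner_commute power2_eq_square)
    then have "z \<bullet> z > 0" by (simp add: add_pos_nonneg)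
    then have nz: "norm z > 0" by (simp add: inner_gt_zero_iff)
    have "z /\<^sub>R norm z \<in> K" unfolding K_def using zW nz W(1) by (simp add: subspace_scale)
    then have "(z /\<^sub>R norm z) \<bullet> (A *v (z /\<^sub>R norm z)) \<le> l" using max unfolding l_def by blast
    then have "(z \<bullet> (A *v z)) / (norm z)\<^sup>2 \<le> l"
      by (simp add: matrix_vector_mult_scaleR power2_eq_square divide_inverse mult_ac)
    then have "z \<bullet> (A *v z) \<le> l * (z \<bullet> z)" using nz by (simp add: divide_le_eq power2_norm_eq_inner)
    moreover have "z \<bullet> (A *v z) = l + 2 * t * (y \<bullet> (A *v x0)) + t\<^sup>2 * (y \<bullet> (A *v y))"
      using inner_symmetric_matrix[OF symA, of x0 y] unfolding z_def l_def
      by (simp add: matrix_vector_right_distrib matrix_vector_mult_scaleR inner_add_left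
          inner_add_right inner_commute power2_eq_square algebra_simps)
    ultimately show ?thesis using zz by (simp add: algebra_simps)
  qed
  then have "y \<bullet> (A *v x0) = 0" by (rule quadratic_nonpos_imp_linear_coeff_zero)
  moreover have "y \<bullet> (A *v x0) = y \<bullet> y + l * (y \<bullet> x0)"
    unfolding y_def by (simp add: inner_diff_left inner_diff_right algebra_simps)
  ultimately have "y = 0" using yx0 by simp
  then show ?thesis using that x0W x0x0 unfolding y_def l_def by (simp add: norm_eq_1)
qed

definition orthonormal_eigenbasis :: "real^'n^'n \<Rightarrow> (real^'n) set \<Rightarrow> (real^'n) set \<Rightarrow> bool" where
  "orthonormal_eigenbasis A W B \<longleftrightarrow> finite B \<and> B \<subseteq> W
     \<and> (\<forall>b\<in>B. norm b = 1 \<and> A *v b = (b \<bullet> (A *v b)) *\<^sub>R b)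
     \<and> (\<forall>b\<in>B. \<forall>b'\<in>B. b \<noteq> b' \<longrightarrow> b \<bullet> b' = 0) \<and> (\<forall>x\<in>W. x = (\<Sum>b\<in>B. (b \<bullet> x) *\<^sub>R b))"

lemma symmetric_matrix_orthonormal_eigenbasis_subspace:
  fixes A :: "real^'n^'n"
  assumes symA: "transpose A = A"
  shows "subspace W \<Longrightarrow> (\<And>x. x \<in> W \<Longrightarrow> A *v x \<in> W) \<Longrightarrow> \<exists>B. orthonormal_eigenbasis A W B"
proof (induction "dim W" arbitrary: W rule: less_induct)
  case less
  show ?case
  proof (cases "W = {0}")
    case True
    show ?thesis by (rule exI[of _ "{}"]) (simp add: True orthonormal_eigenbasis_def)
  next
    case False
    obtain x0 where x0W: "x0 \<in> W" and nx0: "norm x0 = 1" and ex0: "A *v x0 = (x0 \<bullet> (A *v x0)) *\<^sub>R x0"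
      using symmetric_matrix_eigenvector_in_subspace[OF symA less.prems(1) False less.prems(2)] by blast
    have x0x0: "x0 \<bullet> x0 = 1" using nx0 by (simp add: norm_eq_1)
    define W' where "W' = {y\<in>W. x0 \<bullet> y = 0}"
    have sW': "subspace W'" using less.prems(1) unfolding W'_def subspace_def
      by (auto simp: inner_add_right)
    have iW': "A *v y \<in> W'" if "y \<in> W'" for y
    proof -
      have "x0 \<bullet> (A *v y) = ((x0 \<bullet> (A *v x0)) *\<^sub>R x0) \<bullet> y"
        using inner_symmetric_matrix[OF symA, of x0 y] ex0 by simp
      then show ?thesis using that less.prems(2) unfolding W'_def by auto
    qed
    have "x0 \<notin> W'" unfolding W'_def using x0x0 by simp
    then have "W' \<subset> W" using x0W unfolding W'_def by blast
    moreover have "span W' = W'" "span W = W" using sW' less.prems(1) by simp_all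
    ultimately have "dim W' < dim W" using dim_psubset[of W' W] by argo
    from less.hyps[OF this sW' iW'] obtain B' where
      B': "finite B'" "B' \<subseteq> W'" "\<forall>b\<in>B'. norm b = 1 \<and> A *v b = (b \<bullet> (A *v b)) *\<^sub>R b"
        "\<forall>b\<in>B'. \<forall>b'\<in>B'. b \<noteq> b' \<longrightarrow> b \<bullet> b' = 0" "\<forall>x\<in>W'. x = (\<Sum>b\<in>B'. (b \<bullet> x) *\<^sub>R b)"
      unfolding orthonormal_eigenbasis_def by blast
    have x0B': "x0 \<notin> B'" using B'(2) x0x0 unfolding W'_def by auto
    have orth0: "\<forall>b\<in>B'. b \<bullet> x0 = 0" using B'(2) unfolding W'_def by (auto simp: inner_commute)
    have "x = (\<Sum>b\<in>insert x0 B'. (b \<bullet> x) *\<^sub>R b)" if xW: "x \<in> W" for x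
    proof -
      define x' where "x' = x - (x0 \<bullet> x) *\<^sub>R x0"
      have "x' \<in> W'" unfolding W'_def x'_def using xW x0W less.prems(1) x0x0
        by (simp add: subspace_diff subspace_scale inner_diff_right)
      then have "x' = (\<Sum>b\<in>B'. (b \<bullet> x') *\<^sub>R b)" using B'(5) by blast
      also have "\<dots> = (\<Sum>b\<in>B'. (b \<bullet> x) *\<^sub>R b)"
        by (rule sum.cong) (use orth0 in \<open>auto simp: x'_def inner_diff_right\<close>)
      finally show ?thesis using B'(1) x0B' unfolding x'_def by (simp add: algebra_simps)
    qed
    then show ?thesis
      using B' x0W nx0 ex0 orth0 unfolding W'_def orthonormal_eigenbasis_def
      by (intro exI[of _ "insert x0 B'"]) (auto simp: inner_commute)
  qed
qed

lemma symmetric_matrix_orthonormal_eigenbasis: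
  fixes A :: "real^'n^'n"
  assumes "transpose A = A"
  obtains B where "orthonormal_eigenbasis A UNIV B"
  using symmetric_matrix_orthonormal_eigenbasis_subspace[OF assms, of UNIV] by auto

lemma orthonormal_eigenbasis_matrix_vector_mult:
  assumes "orthonormal_eigenbasis A UNIV B"
  shows "M *v x = (\<Sum>b\<in>B. (b \<bullet> x) *\<^sub>R (M *v b))"
proof -
  have "M *v x = M *v (\<Sum>b\<in>B. (b \<bullet> x) *\<^sub>R b)"
    using assms unfolding orthonormal_eigenbasis_def by (metis UNIV_I)
  then show ?thesis by (simp add: matrix_vector_mult_sum matrix_vector_mult_scaleR)
qed

lemma psd_sqrt_exists:
  fixes A :: "real^'n^'n"
  assumes symA: "transpose A = A" and psdA: "psd_mat A"
  obtains S where "transpose S = S" "psd_mat S" "S ** S = A"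
proof -
  obtain B where B: "orthonormal_eigenbasis A UNIV B"
    using symmetric_matrix_orthonormal_eigenbasis[OF symA] by blast
  define lam where "lam b = b \<bullet> (A *v b)" for b
  have lam0: "lam b \<ge> 0" for b using psdA unfolding psd_mat_def lam_def by blast
  define S where "S = (\<Sum>b\<in>B. sqrt (lam b) *\<^sub>R outer b b)"
  have Sx: "S *v x = (\<Sum>b\<in>B. (sqrt (lam b) * (b \<bullet> x)) *\<^sub>R b)" for x
    unfolding S_def sum_matrix_vector_mult scaleR_matrix_vector_assoc[symmetric] outer_matrix_vector_mult
    by simp
  have "transpose S = S"
    unfolding S_def by (simp add: vec_eq_iff transpose_def outer_def mult.commute)
  moreover have "psd_mat S" unfolding psd_mat_def
  proof
    fix x
    have "x \<bullet> (S *v x) = (\<Sum>b\<in>B. sqrt (lam b) * (b \<bullet> x)\<^sup>2)"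
      unfolding Sx by (simp add: inner_sum_right inner_commute power2_eq_square mult.assoc)
    also have "\<dots> \<ge> 0" by (intro sum_nonneg) (simp add: lam0)
    finally show "0 \<le> x \<bullet> (S *v x)" .
  qed
  moreover have "(S ** S) *v x = A *v x" for x
  proof -
    have "(S ** S) *v x = (\<Sum>b\<in>B. (sqrt (lam b) * (b \<bullet> (S *v x))) *\<^sub>R b)"
      by (simp only: matrix_vector_mul_assoc[symmetric] Sx[of "S *v x"])
    also have "\<dots> = (\<Sum>b\<in>B. (b \<bullet> x) *\<^sub>R (A *v b))"
    proof (rule sum.cong)
      fix b assume b: "b \<in> B"
      have "b \<bullet> (S *v x) = sqrt (lam b) * (b \<bullet> x)" unfolding Sx
        by (rule inner_sum_orthonormal) (use B b in \<open>auto simp: orthonormal_eigenbasis_def\<close>)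
      then have "sqrt (lam b) * (b \<bullet> (S *v x)) = (b \<bullet> x) * lam b"
        using lam0[of b] by (simp add: mult.assoc[symmetric])
      moreover have "A *v b = lam b *\<^sub>R b" using B b unfolding lam_def orthonormal_eigenbasis_def by blast
      ultimately show "(sqrt (lam b) * (b \<bullet> (S *v x))) *\<^sub>R b = (b \<bullet> x) *\<^sub>R (A *v b)"
        by simp
    qed simp
    also have "\<dots> = A *v x" by (rule orthonormal_eigenbasis_matrix_vector_mult[OF B, symmetric])
    finally show ?thesis .
  qed
  then have "S ** S = A" by (simp add: matrix_eq)
  ultimately show ?thesis using that by blast
qed

text \<open>If \<open>S\<^sup>2 = S'\<^sup>2\<close> and \<open>S' b = \<mu> b\<close>, then \<open>w = S b - \<mu> b\<close> satisfies \<open>S w = - \<mu> w\<close>, which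
  for positive semidefinite \<open>S\<close> and \<open>\<mu> \<ge> 0\<close> forces \<open>w = 0\<close>.\<close>

lemma psd_sqrt_unique:
  fixes S S' :: "real^'n^'n"
  assumes sS: "transpose S = S" and pS: "psd_mat S" and sS': "transpose S' = S'" and pS': "psd_mat S'"
    and eq: "S ** S = S' ** S'"
  shows "S = S'"
proof -
  obtain B where B: "orthonormal_eigenbasis S' UNIV B"
    using symmetric_matrix_orthonormal_eigenbasis[OF sS'] by blast
  have Sb: "S *v b = S' *v b" if b: "b \<in> B" for b
  proof -
    define \<mu> where "\<mu> = b \<bullet> (S' *v b)"
    have \<mu>0: "\<mu> \<ge> 0" using pS' unfolding psd_mat_def \<mu>_def by blast
    have eb: "S' *v b = \<mu> *\<^sub>R b" using B b unfolding \<mu>_def orthonormal_eigenbasis_def by blast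
    have SSb: "S *v (S *v b) = (\<mu> * \<mu>) *\<^sub>R b"
      using eq eb by (metis matrix_vector_mul_assoc matrix_vector_mult_scaleR scaleR_scaleR)
    define w where "w = S *v b - \<mu> *\<^sub>R b"
    have "S *v w = - \<mu> *\<^sub>R w"
      unfolding w_def using SSb by (simp add: matrix_vector_mult_diff_distrib matrix_vector_mult_scaleR algebra_simps)
    then have "w \<bullet> (S *v w) + \<mu> * (w \<bullet> w) = 0" by simp
    moreover have "w \<bullet> (S *v w) \<ge> 0" using pS unfolding psd_mat_def by blast
    ultimately have "\<mu> * (w \<bullet> w) = 0" "w \<bullet> (S *v w) = 0" using \<mu>0 by (simp_all add: add_nonneg_eq_0_iff)
    moreover have "w \<bullet> w = 0" if "\<mu> = 0"
    proof -
      have "w \<bullet> w = b \<bullet> (S *v (S *v b))"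
        using inner_symmetric_matrix[OF sS, of b "S *v b"] that unfolding w_def by simp
      then show ?thesis using SSb that by simp
    qed
    ultimately have "w = 0" by fastforce
    then show ?thesis unfolding w_def using eb by simp
  qed
  have "S *v x = S' *v x" for x
  proof -
    have "S *v x = (\<Sum>b\<in>B. (b \<bullet> x) *\<^sub>R (S *v b))"
      by (rule orthonormal_eigenbasis_matrix_vector_mult[OF B])
    also have "\<dots> = (\<Sum>b\<in>B. (b \<bullet> x) *\<^sub>R (S' *v b))" by (rule sum.cong) (simp_all add: Sb)
    also have "\<dots> = S' *v x" by (rule orthonormal_eigenbasis_matrix_vector_mult[OF B, symmetric])
    finally show ?thesis .
  qed
  then show ?thesis by (simp add: matrix_eq)
qed

lemma msqrt_unique:
  assumes "transpose S = S" "psd_mat S" "S ** S = M"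
  shows "msqrt M = S"
  unfolding msqrt_def by (rule the_equality) (use assms psd_sqrt_unique in auto)

lemma msqrt_psd_sqrt:
  assumes "transpose M = M" "psd_mat M"
  shows "transpose (msqrt M) = msqrt M" "psd_mat (msqrt M)" "msqrt M ** msqrt M = M"
  using psd_sqrt_exists[OF assms] msqrt_unique by metis+

lemma matrix_inv_unique:
  fixes A B :: "real^'n^'n"
  assumes "A ** B = mat 1"
  shows "matrix_inv A = B"
proof -
  have "B ** A = mat 1" using assms matrix_left_right_inverse by blast
  have "A ** matrix_inv A = mat 1 \<and> matrix_inv A ** A = mat 1"
    unfolding matrix_inv_def by (rule someI[of _ B]) (use assms \<open>B ** A = mat 1\<close> in auto)
  then have "matrix_inv A ** A = mat 1" by blast
  have "matrix_inv A = matrix_inv A ** (A ** B)" by (simp add: assms)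
  also have "\<dots> = B" by (metis matrix_mul_assoc matrix_mul_lid \<open>matrix_inv A ** A = mat 1\<close>)
  finally show ?thesis .
qed

lemma invertible_if_coercive:
  fixes M :: "real^'n^'n"
  assumes "0 < \<epsilon>" and "\<And>x. \<epsilon> * (x \<bullet> x) \<le> x \<bullet> (M *v x)"
  shows "invertible M"
  unfolding invertible_left_inverse matrix_left_invertible_ker
proof (intro allI impI)
  fix x assume "M *v x = 0"
  then have "\<epsilon> * (x \<bullet> x) \<le> 0" using assms(2)[of x] by simp
  then have "x \<bullet> x \<le> 0" using assms(1) by (simp add: mult_le_0_iff)
  then have "x \<bullet> x = 0" using inner_ge_zero[of x] by linarith
  then show "x = 0" by simp
qed

lemma psd_mat_if_coercive:
  fixes M :: "real^'n^'n"
  assumes "0 \<le> \<epsilon>" and "\<And>x. \<epsilon> * (x \<bullet> x) \<le> x \<bullet> (M *v x)"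
  shows "psd_mat M"
  unfolding psd_mat_def using assms order_trans[OF mult_nonneg_nonneg[OF assms(1) inner_ge_zero]]
  by blast

lemma psd_mat_congruence:
  assumes "psd_mat M"
  shows "psd_mat (transpose T ** M ** T)"
  unfolding psd_mat_def
proof
  fix x
  have "x \<bullet> ((transpose T ** M ** T) *v x) = (T *v x) \<bullet> (M *v (T *v x))"
    using inner_matrix_vector_transpose[of x "transpose T" "M *v (T *v x)"]
    by (simp only: matrix_vector_mul_assoc transpose_transpose matrix_mul_assoc)
  then show "0 \<le> x \<bullet> ((transpose T ** M ** T) *v x)"
    using assms unfolding psd_mat_def by simp
qed

lemma inner_psd_plus_scaled_id:
  assumes "psd_mat L"
  shows "\<epsilon> * (x \<bullet> x) \<le> x \<bullet> ((L + \<epsilon> *\<^sub>R mat 1) *v x)"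
proof -
  have "(L + \<epsilon> *\<^sub>R mat 1) *v x = L *v x + \<epsilon> *\<^sub>R x"
    by (metis matrix_vector_mult_add_rdistrib scaleR_matrix_vector_assoc matrix_vector_mul_lid)
  then show ?thesis using assms unfolding psd_mat_def by (simp add: inner_add_right)
qed

definition diag_mat :: "('n::finite \<Rightarrow> real) \<Rightarrow> real^'n^'n" where
  "diag_mat a = (\<chi> j l. if j = l then a j else 0)"

lemma diag_mat_mult_vector: "diag_mat a *v x = (\<chi> j. a j * x $ j)"
  by (simp add: vec_eq_iff diag_mat_def matrix_vector_mult_def if_distrib if_distribR cong: if_cong)

lemma diag_mat_mult: "diag_mat a ** diag_mat b = diag_mat (\<lambda>j. a j * b j)"
  by (simp add: matrix_eq matrix_vector_mul_assoc[symmetric] diag_mat_mult_vector mult.assoc)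

lemma transpose_diag_mat: "transpose (diag_mat a) = diag_mat a"
  by (simp add: vec_eq_iff diag_mat_def transpose_def)

lemma diag_mat_mult_entry: "(diag_mat a ** A ** diag_mat b) $ j $ l = a j * A $ j $ l * b l"
  by (simp add: diag_mat_def matrix_matrix_mult_def if_distrib if_distribR sum.delta sum.delta'
      cong: if_cong)

lemma psd_diag_mat:
  fixes a :: "'n::finite \<Rightarrow> real"
  assumes "\<And>j. 0 \<le> a j"
  shows "psd_mat (diag_mat a)"
  unfolding psd_mat_def
proof
  fix x :: "real^'n"
  have "x \<bullet> (diag_mat a *v x) = (\<Sum>j\<in>UNIV. a j * (x $ j)\<^sup>2)"
    by (simp add: diag_mat_mult_vector inner_vec_def power2_eq_square mult_ac)
  also have "\<dots> \<ge> 0" using assms by (intro sum_nonneg) simp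
  finally show "0 \<le> x \<bullet> (diag_mat a *v x)" .
qed

lemma msqrt_diag_mat:
  assumes "\<And>j. 0 \<le> a j"
  shows "msqrt (diag_mat a) = diag_mat (\<lambda>j. sqrt (a j))"
  using assms by (intro msqrt_unique) (simp_all add: transpose_diag_mat psd_diag_mat diag_mat_mult)

lemma misqrt_diag_mat:
  assumes "\<And>j. 0 < a j"
  shows "misqrt (diag_mat a) = diag_mat (\<lambda>j. 1 / sqrt (a j))"
proof -
  have "diag_mat (\<lambda>j. sqrt (a j)) ** diag_mat (\<lambda>j. 1 / sqrt (a j)) = mat 1"
  proof -
    have "sqrt (a j) * (1 / sqrt (a j)) = 1" for j using assms[of j] by simp
    then show ?thesis by (simp add: diag_mat_mult) (simp add: diag_mat_def mat_def vec_eq_iff)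
  qed
  then show ?thesis
    unfolding misqrt_def using assms by (simp add: msqrt_diag_mat less_imp_le matrix_inv_unique)
qed

lemma degmat_eq_diag_mat: "degmat A = diag_mat (\<lambda>j. \<Sum>l\<in>UNIV. A $ j $ l)"
  by (simp add: degmat_def diag_mat_def)

lemma Lsym_entry:
  assumes "\<And>j. 0 < (\<Sum>l\<in>UNIV. A $ j $ l)"
  shows "Lsym A $ j $ l = (if j = l then 1 else 0)
           - A $ j $ l / (sqrt (\<Sum>l'\<in>UNIV. A $ j $ l') * sqrt (\<Sum>l'\<in>UNIV. A $ l $ l'))"
  unfolding Lsym_def degmat_eq_diag_mat using assms
  by (simp add: misqrt_diag_mat diag_mat_mult_entry mat_def)

text \<open>The quadratic form of the combinatorial Laplacian is \<open>(1/2) \<Sum>\<^sub>j\<^sub>l A\<^sub>j\<^sub>l (x\<^sub>j - x\<^sub>l)\<^sup>2\<close>.\<close>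

lemma psd_combinatorial_laplacian:
  fixes A :: "real^'n^'n"
  assumes sym: "transpose A = A" and nonneg: "\<And>j l. 0 \<le> A $ j $ l"
  shows "psd_mat (degmat A - A)"
  unfolding psd_mat_def
proof
  fix x :: "real^'n"
  define Q where "Q = (\<Sum>j\<in>UNIV. \<Sum>l\<in>UNIV. A $ j $ l * (x $ j)\<^sup>2)"
  define P where "P = (\<Sum>j\<in>UNIV. \<Sum>l\<in>UNIV. A $ j $ l * x $ j * x $ l)"
  have "x \<bullet> (degmat A *v x) = Q"
    unfolding Q_def degmat_eq_diag_mat diag_mat_mult_vector
    by (simp add: inner_vec_def sum_distrib_left sum_distrib_right power2_eq_square mult_ac)
  moreover have "x \<bullet> (A *v x) = P"
    unfolding P_def by (simp add: inner_vec_def matrix_vector_mult_def sum_distrib_left mult_ac)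
  ultimately have form: "x \<bullet> ((degmat A - A) *v x) = Q - P"
    by (simp add: matrix_vector_mult_diff_rdistrib inner_diff_right)
  have "(\<Sum>j\<in>UNIV. \<Sum>l\<in>UNIV. A $ j $ l * (x $ l)\<^sup>2) = Q"
    unfolding Q_def using sym by (subst sum.swap) (simp add: vec_eq_iff transpose_def)
  then have "(\<Sum>j\<in>UNIV. \<Sum>l\<in>UNIV. A $ j $ l * (x $ j - x $ l)\<^sup>2) = 2 * (Q - P)"
    unfolding Q_def P_def
    by (simp add: power2_diff algebra_simps sum.distrib sum_subtractf sum_distrib_left)
  moreover have "0 \<le> (\<Sum>j\<in>UNIV. \<Sum>l\<in>UNIV. A $ j $ l * (x $ j - x $ l)\<^sup>2)"
    using nonneg by (intro sum_nonneg) simp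
  ultimately show "0 \<le> x \<bullet> ((degmat A - A) *v x)" using form by simp
qed

lemma psd_Lsym:
  fixes A :: "real^'n^'n"
  assumes sym: "transpose A = A" and nonneg: "\<And>j l. 0 \<le> A $ j $ l"
    and deg: "\<And>j. 0 < (\<Sum>l\<in>UNIV. A $ j $ l)"
  shows "psd_mat (Lsym A)"
proof -
  define D where "D = diag_mat (\<lambda>j. 1 / sqrt (\<Sum>l\<in>UNIV. A $ j $ l))"
  have "Lsym A = transpose D ** (degmat A - A) ** D"
  proof -
    have "(transpose D ** (degmat A - A) ** D) $ j $ l = Lsym A $ j $ l" for j l
      using deg[of j] deg[of l] unfolding D_def transpose_diag_mat diag_mat_mult_entry
      by (auto simp: Lsym_entry[OF deg] degmat_def mat_def diff_divide_distrib)
    then show ?thesis by (simp add: vec_eq_iff)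
  qed
  then show ?thesis using psd_mat_congruence psd_combinatorial_laplacian[OF sym nonneg] by metis
qed

definition cluster_adj :: "('n::finite \<Rightarrow> 'k) \<Rightarrow> real \<Rightarrow> real \<Rightarrow> real^'n^'n" where
  "cluster_adj c a b = (\<chi> j l. if j = l then 0 else if c j = c l then a else b)"

definition cluster_degree :: "('n::finite \<Rightarrow> 'k) \<Rightarrow> real \<Rightarrow> real \<Rightarrow> 'k \<Rightarrow> real" where
  "cluster_degree c a b i = a * (real (csize c i) - 1) + b * (real CARD('n) - real (csize c i))"

definition cluster_core :: "('n::finite \<Rightarrow> 'k::finite) \<Rightarrow> real \<Rightarrow> real \<Rightarrow> real \<Rightarrow> real^'k^'k" where
  "cluster_core c a b \<tau> =
     - b *\<^sub>R outer (\<chi> i. sqrt (real (csize c i) / cluster_degree c a b i))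
                   (\<chi> i. sqrt (real (csize c i) / cluster_degree c a b i))
     + (\<chi> i i'. if i = i'
                 then 1 + \<tau> + (a - real (csize c i) * (a - b)) / cluster_degree c a b i else 0)"

lemma sum_if_cluster:
  fixes c :: "'n::finite \<Rightarrow> 'k"
  shows "(\<Sum>j\<in>UNIV. if c j = i then x else 0) = real (csize c i) * x"
  by (simp add: sum.If_cases csize_def)

lemma rowsum_cluster_adj: "(\<Sum>l\<in>UNIV. cluster_adj c a b $ j $ l) = cluster_degree c a b (c j)"
proof -
  have "(\<Sum>l\<in>UNIV. cluster_adj c a b $ j $ l)
      = (\<Sum>l\<in>UNIV. b + (if c l = c j then a - b else 0) - (if j = l then a else 0))"
    unfolding cluster_adj_def by (rule sum.cong) auto
  then show ?thesis
    by (simp add: sum.distrib sum_subtractf sum_if_cluster cluster_degree_def algebra_simps)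
qed

lemma transpose_cluster_adj: "transpose (cluster_adj c a b) = cluster_adj c a b"
  by (simp add: vec_eq_iff transpose_def cluster_adj_def eq_commute)

lemma psd_Lsym_cluster_adj:
  assumes "0 \<le> a" "0 \<le> b" "\<And>i. 0 < cluster_degree c a b i"
  shows "psd_mat (Lsym (cluster_adj c a b))"
proof (rule psd_Lsym)
  show "0 \<le> cluster_adj c a b $ j $ l" for j l using assms by (simp add: cluster_adj_def)
  show "0 < (\<Sum>l\<in>UNIV. cluster_adj c a b $ j $ l)" for j using assms by (simp add: rowsum_cluster_adj)
qed (rule transpose_cluster_adj)

lemma transpose_cluster_core: "transpose (cluster_core c a b \<tau>) = cluster_core c a b \<tau>"
  by (simp add: vec_eq_iff transpose_def cluster_core_def outer_def mult.commute)

declare transpose_matrix_vector [simp del]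

locale cluster_frame =
  fixes c :: "'n::finite \<Rightarrow> 'k::finite" and v :: "nat \<Rightarrow> real^'n" and g :: "nat \<Rightarrow> 'k" and N :: nat
  assumes surj_c: "surj c"
    and v_orthonormal: "\<forall>m<N. \<forall>m'<N. v m \<bullet> v m' = (if m = m' then 1 else 0)"
    and span_v: "span (v ` {..<N}) = {x. \<forall>y \<in> span (columns (Theta c)). x \<bullet> y = 0}"
    and v_support: "\<forall>m<N. \<forall>j. v m $ j \<noteq> 0 \<longrightarrow> c j = g m"
begin

definition perp_diag :: "('k \<Rightarrow> real) \<Rightarrow> real^'n^'n" where
  "perp_diag f = (\<Sum>m<N. f (g m) *\<^sub>R outer (v m) (v m))"

definition block :: "real^'k^'k \<Rightarrow> ('k \<Rightarrow> real) \<Rightarrow> real^'n^'n" where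
  "block X f = Theta c ** X ** transpose (Theta c) + perp_diag f"

lemma csize_pos: "0 < csize c i"
proof -
  obtain j where "c j = i" using surj_c by (metis surjD)
  then show ?thesis unfolding csize_def by (auto simp: card_gt_0_iff)
qed

lemma Theta_mult_entry:
  "(Theta c ** X ** transpose (Theta c)) $ j $ l
     = X $ c j $ c l / (sqrt (real (csize c (c j))) * sqrt (real (csize c (c l))))"
  by (simp add: matrix_matrix_mult_def transpose_def Theta_def if_distrib if_distribR sum.delta'
      cong: if_cong)

lemma transpose_Theta_Theta: "transpose (Theta c) ** Theta c = mat 1"
proof -
  have "(transpose (Theta c) ** Theta c) $ i $ i' = (\<Sum>j\<in>UNIV. Theta c $ j $ i * Theta c $ j $ i')"
    for i i' by (simp add: matrix_matrix_mult_def transpose_def)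
  also have "\<dots> i i' = (\<Sum>j\<in>UNIV. if c j = i then (if i = i' then 1 / real (csize c i) else 0) else 0)"
    for i i' by (rule sum.cong) (auto simp: Theta_def)
  finally show ?thesis using csize_pos by (simp add: vec_eq_iff sum_if_cluster mat_def)
qed

lemma transpose_Theta_Theta_vector: "transpose (Theta c) *v (Theta c *v z) = z"
  by (simp add: matrix_vector_mul_assoc transpose_Theta_Theta)

lemma transpose_Theta_v: "m < N \<Longrightarrow> transpose (Theta c) *v v m = 0"
proof -
  assume "m < N"
  then have "v m \<in> span (v ` {..<N})" by (intro span_base) auto
  then have perp: "v m \<bullet> y = 0" if "y \<in> span (columns (Theta c))" for y using span_v that by blast
  have "(transpose (Theta c) *v v m) $ i = v m \<bullet> column i (Theta c)" for i
    by (simp add: matrix_vector_mult_def transpose_def column_def inner_vec_def mult.commute)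
  moreover have "column i (Theta c) \<in> span (columns (Theta c))" for i
    by (intro span_base) (auto simp: columns_def)
  ultimately show ?thesis using perp by (simp add: vec_eq_iff)
qed

lemma inner_v_sum:
  assumes "m' < N"
  shows "v m' \<bullet> (\<Sum>m<N. a m *\<^sub>R v m) = a m'"
proof -
  have "v m' \<bullet> (\<Sum>m<N. a m *\<^sub>R v m) = (\<Sum>m<N. if m = m' then a m else 0)"
    unfolding inner_sum_right by (rule sum.cong) (use v_orthonormal assms in auto)
  then show ?thesis using assms by (simp add: sum.delta')
qed

lemma transpose_Theta_sum_v: "transpose (Theta c) *v (\<Sum>m<N. a m *\<^sub>R v m) = 0"
  by (simp add: matrix_vector_mult_sum matrix_vector_mult_scaleR transpose_Theta_v)

text \<open>The columns of \<open>\<Theta>\<close> together with the \<open>v m\<close> form an orthonormal basis: the residual of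
  \<open>x\<close> is orthogonal to both spans, and \<open>span_v\<close> identifies them as complements.\<close>

lemma frame_expansion: "x = Theta c *v (transpose (Theta c) *v x) + (\<Sum>m<N. (v m \<bullet> x) *\<^sub>R v m)"
proof -
  define r where "r = x - Theta c *v (transpose (Theta c) *v x) - (\<Sum>m<N. (v m \<bullet> x) *\<^sub>R v m)"
  have "transpose (Theta c) *v r = 0" unfolding r_def
    by (simp add: matrix_vector_mult_diff_distrib transpose_Theta_Theta_vector transpose_Theta_sum_v)
  then have "r \<bullet> y = 0" if "y \<in> columns (Theta c)" for y
    using that unfolding columns_def
    by (auto simp: vec_eq_iff matrix_vector_mult_def transpose_def column_def inner_vec_def mult.commute)
  then have r_span: "r \<in> span (v ` {..<N})"
    unfolding span_v using orthogonal_to_span by (fastforce simp: orthogonal_def)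
  have r_perp: "v m \<bullet> r = 0" if "m < N" for m
    using that unfolding r_def
    by (simp add: inner_diff_right inner_v_sum inner_matrix_vector_transpose transpose_Theta_v)
  have "orthogonal r r"
    using r_span by (rule orthogonal_to_span) (use r_perp in \<open>auto simp: orthogonal_def inner_commute\<close>)
  then have "r = 0" by (simp add: orthogonal_def)
  then show ?thesis unfolding r_def by (simp add: algebra_simps)
qed

lemma perp_diag_mult_vector: "perp_diag f *v x = (\<Sum>m<N. (f (g m) * (v m \<bullet> x)) *\<^sub>R v m)"
  unfolding perp_diag_def sum_matrix_vector_mult scaleR_matrix_vector_assoc[symmetric]
    outer_matrix_vector_mult by simp

lemma block_mult_vector:
  "block X f *v x = Theta c *v (X *v (transpose (Theta c) *v x)) + perp_diag f *v x"
  unfolding block_def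
  by (simp add: matrix_vector_mult_add_rdistrib matrix_vector_mul_assoc matrix_mul_assoc)

lemma transpose_Theta_perp_diag: "transpose (Theta c) *v (perp_diag f *v x) = 0"
  unfolding perp_diag_mult_vector by (rule transpose_Theta_sum_v)

lemma perp_diag_Theta: "perp_diag f *v (Theta c *v z) = 0"
  unfolding perp_diag_mult_vector
  by (simp add: inner_matrix_vector_transpose transpose_Theta_v inner_commute[of "v _"])

lemma perp_diag_perp_diag: "perp_diag f *v (perp_diag h *v x) = perp_diag (\<lambda>i. f i * h i) *v x"
  unfolding perp_diag_mult_vector[of f] by (simp add: perp_diag_mult_vector inner_v_sum mult.assoc)

lemma block_mult: "block X f ** block Y h = block (X ** Y) (\<lambda>i. f i * h i)"
proof -
  have "block X f *v (block Y h *v x) = block (X ** Y) (\<lambda>i. f i * h i) *v x" for x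
    by (simp add: block_mult_vector matrix_vector_right_distrib matrix_vector_mul_assoc[symmetric]
        transpose_Theta_Theta_vector transpose_Theta_perp_diag perp_diag_Theta perp_diag_perp_diag)
  then show ?thesis by (simp add: matrix_eq matrix_vector_mul_assoc[symmetric])
qed

lemma block_one: "block (mat 1) (\<lambda>_. 1) = mat 1"
  using frame_expansion by (simp add: matrix_eq block_mult_vector perp_diag_mult_vector)

lemma transpose_block: "transpose (block X f) = block (transpose X) f"
proof -
  have "transpose (perp_diag f) = perp_diag f"
    unfolding perp_diag_def by (simp add: vec_eq_iff transpose_def outer_def mult.commute)
  moreover have "transpose (A + B) = transpose A + transpose B" for A B :: "real^'n^'n"
    by (simp add: vec_eq_iff transpose_def)
  ultimately show ?thesis unfolding block_def by (simp add: matrix_transpose_mul matrix_mul_assoc)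
qed

lemma Theta_compress_block: "transpose (Theta c) ** block X f ** Theta c = X"
proof -
  have "(transpose (Theta c) ** block X f ** Theta c) *v z = X *v z" for z
    by (simp add: matrix_vector_mul_assoc[symmetric] block_mult_vector matrix_vector_right_distrib
        transpose_Theta_Theta_vector transpose_Theta_perp_diag perp_diag_Theta)
  then show ?thesis by (simp add: matrix_eq)
qed

lemma psd_block:
  assumes "psd_mat X" "\<And>i. 0 \<le> f i"
  shows "psd_mat (block X f)"
  unfolding psd_mat_def
proof
  fix x
  have "x \<bullet> (perp_diag f *v x) = (\<Sum>m<N. f (g m) * (v m \<bullet> x)\<^sup>2)"
    unfolding perp_diag_mult_vector inner_sum_right
    by (simp add: inner_commute[of x] power2_eq_square mult.assoc)
  also have "\<dots> \<ge> 0" using assms(2) by (intro sum_nonneg) simp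
  moreover have "x \<bullet> (Theta c *v (X *v (transpose (Theta c) *v x))) \<ge> 0"
    using assms(1) unfolding psd_mat_def inner_matrix_vector_transpose[of x "Theta c"] by blast
  ultimately show "0 \<le> x \<bullet> (block X f *v x)"
    unfolding block_mult_vector inner_add_right by linarith
qed

lemma coercive_compress_block:
  assumes "\<And>x. \<epsilon> * (x \<bullet> x) \<le> x \<bullet> (block X f *v x)"
  shows "\<epsilon> * (z \<bullet> z) \<le> z \<bullet> (X *v z)"
proof -
  have "X *v z = transpose (Theta c) *v (block X f *v (Theta c *v z))"
    by (metis Theta_compress_block matrix_vector_mul_assoc)
  then have "z \<bullet> (X *v z) = (Theta c *v z) \<bullet> (block X f *v (Theta c *v z))"
    by (simp add: inner_matrix_vector_transpose)
  moreover have "(Theta c *v z) \<bullet> (Theta c *v z) = z \<bullet> z"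
    using inner_matrix_vector_transpose[of "Theta c *v z" "Theta c" z]
    by (simp add: transpose_Theta_Theta_vector inner_commute)
  ultimately show ?thesis using assms by metis
qed

lemma sum_v_entries:
  "(\<Sum>m<N. v m $ j * v m $ l)
     = (if j = l then 1 else 0) - (if c j = c l then 1 / real (csize c (c j)) else 0)"
proof -
  have "(axis l 1 :: real^'n) $ j
      = (Theta c *v (transpose (Theta c) *v axis l 1)) $ j + (\<Sum>m<N. v m $ l * v m $ j)"
    using arg_cong[where f="\<lambda>z. z $ j", OF frame_expansion[of "axis l 1"]] by (simp add: inner_axis)
  moreover have "(Theta c *v (transpose (Theta c) *v axis l 1)) $ j = (Theta c ** transpose (Theta c)) $ j $ l"
    by (simp only: matrix_vector_mul_assoc) (simp add: matrix_vector_mult_basis column_def)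
  moreover have "(Theta c ** transpose (Theta c)) $ j $ l
      = (if c j = c l then 1 / real (csize c (c j)) else 0)"
    using Theta_mult_entry[of "mat 1" j l] csize_pos[of "c l"] unfolding matrix_mul_rid by (auto simp: mat_def)
  ultimately show ?thesis by (simp add: axis_def mult.commute)
qed

lemma perp_diag_entry:
  "perp_diag f $ j $ l
     = f (c j) * ((if j = l then 1 else 0) - (if c j = c l then 1 / real (csize c (c j)) else 0))"
proof -
  have "perp_diag f $ j $ l = (\<Sum>m<N. f (g m) * (v m $ j * v m $ l))"
    by (simp add: perp_diag_def outer_def)
  also have "\<dots> = (\<Sum>m<N. f (c j) * (v m $ j * v m $ l))"
    by (rule sum.cong) (use v_support in \<open>force+\<close>)
  finally show ?thesis by (simp add: sum_distrib_left[symmetric] sum_v_entries)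
qed

lemma block_entry:
  "block X f $ j $ l
     = X $ c j $ c l / (sqrt (real (csize c (c j))) * sqrt (real (csize c (c l))))
       + f (c j) * ((if j = l then 1 else 0) - (if c j = c l then 1 / real (csize c (c j)) else 0))"
  by (simp add: block_def Theta_mult_entry perp_diag_entry)

lemma msqrt_block:
  assumes "transpose X = X" "psd_mat X" "\<And>i. 0 \<le> f i"
  shows "msqrt (block X f) = block (msqrt X) (\<lambda>i. sqrt (f i))"
proof (rule msqrt_unique)
  show "transpose (block (msqrt X) (\<lambda>i. sqrt (f i))) = block (msqrt X) (\<lambda>i. sqrt (f i))"
    using msqrt_psd_sqrt(1)[OF assms(1,2)] by (simp add: transpose_block)
  show "psd_mat (block (msqrt X) (\<lambda>i. sqrt (f i)))"
    using msqrt_psd_sqrt(2)[OF assms(1,2)] assms(3) by (intro psd_block) auto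
  have "(\<lambda>i. sqrt (f i) * sqrt (f i)) = f" using assms(3) by (simp add: fun_eq_iff)
  then show "block (msqrt X) (\<lambda>i. sqrt (f i)) ** block (msqrt X) (\<lambda>i. sqrt (f i)) = block X f"
    using msqrt_psd_sqrt(3)[OF assms(1,2)] by (simp add: block_mult)
qed

lemma matrix_inv_block:
  assumes "invertible X" "\<And>i. f i \<noteq> 0"
  shows "matrix_inv (block X f) = block (matrix_inv X) (\<lambda>i. 1 / f i)"
proof (rule matrix_inv_unique)
  have "X ** matrix_inv X = mat 1"
    using assms(1) matrix_inv_unique invertible_right_inverse by metis
  moreover have "(\<lambda>i. f i * (1 / f i)) = (\<lambda>_. 1)" using assms(2) by (simp add: fun_eq_iff)
  ultimately show "block X f ** block (matrix_inv X) (\<lambda>i. 1 / f i) = mat 1"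
    by (simp add: block_mult block_one)
qed

lemma misqrt_block:
  assumes "transpose X = X" "psd_mat X" "invertible X" "\<And>i. 0 < f i"
  shows "misqrt (block X f) = block (misqrt X) (\<lambda>i. 1 / sqrt (f i))"
proof -
  obtain Y where "X ** Y = mat 1" using assms(3) invertible_right_inverse by blast
  then have "msqrt X ** (msqrt X ** Y) = mat 1"
    using msqrt_psd_sqrt(3)[OF assms(1,2)] by (simp add: matrix_mul_assoc)
  then have "invertible (msqrt X)" using invertible_right_inverse by blast
  moreover have "msqrt (block X f) = block (msqrt X) (\<lambda>i. sqrt (f i))"
    using assms by (intro msqrt_block) (auto simp: less_imp_le)
  moreover have "sqrt (f i) \<noteq> 0" for i using assms(4)[of i] by simp
  ultimately show ?thesis unfolding misqrt_def by (simp add: matrix_inv_block)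
qed

lemma Lsym_cluster_adj_shift_eq_block:
  assumes deg: "\<And>i. 0 < cluster_degree c a b i"
  shows "Lsym (cluster_adj c a b) + \<tau> *\<^sub>R mat 1
           = block (cluster_core c a b \<tau>) (\<lambda>i. 1 + \<tau> + a / cluster_degree c a b i)"
proof -
  have "(Lsym (cluster_adj c a b) + \<tau> *\<^sub>R mat 1) $ j $ l
          = block (cluster_core c a b \<tau>) (\<lambda>i. 1 + \<tau> + a / cluster_degree c a b i) $ j $ l" for j l
  proof -
    define nj nl dj dl where "nj = real (csize c (c j))" and "nl = real (csize c (c l))"
      and "dj = cluster_degree c a b (c j)" and "dl = cluster_degree c a b (c l)"
    have pos: "0 < nj" "0 < nl" "0 < dj" "0 < dl"
      unfolding nj_def nl_def dj_def dl_def using csize_pos deg by simp_all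
    have L: "(Lsym (cluster_adj c a b) + \<tau> *\<^sub>R mat 1) $ j $ l
        = (if j = l then 1 + \<tau> else 0) - cluster_adj c a b $ j $ l / (sqrt dj * sqrt dl)"
      using deg unfolding dj_def dl_def
      by (simp add: Lsym_entry rowsum_cluster_adj mat_def)
    have B: "block (cluster_core c a b \<tau>) (\<lambda>i. 1 + \<tau> + a / cluster_degree c a b i) $ j $ l
        = (- b * (sqrt nj / sqrt dj) * (sqrt nl / sqrt dl)
             + (if c j = c l then 1 + \<tau> + (a - nj * (a - b)) / dj else 0)) / (sqrt nj * sqrt nl)
          + (1 + \<tau> + a / dj) * ((if j = l then 1 else 0) - (if c j = c l then 1 / nj else 0))"
      unfolding block_entry nj_def nl_def dj_def dl_def
      by (simp add: cluster_core_def outer_def real_sqrt_divide)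
    show ?thesis
    proof (cases "c j = c l")
      case True
      then have "nl = nj" "dl = dj" unfolding nj_def nl_def dj_def dl_def by simp_all
      with True pos show ?thesis unfolding L B
        by (cases "j = l") (simp_all add: cluster_adj_def field_simps)
    next
      case False
      then have "j \<noteq> l" by auto
      with False pos show ?thesis unfolding L B by (simp add: cluster_adj_def field_simps)
    qed
  qed
  then show ?thesis by (simp add: vec_eq_iff)
qed

lemma cluster_core_coercive:
  assumes "0 \<le> a" "0 \<le> b" "\<And>i. 0 < cluster_degree c a b i"
  shows "\<tau> * (z \<bullet> z) \<le> z \<bullet> (cluster_core c a b \<tau> *v z)"
  using assms
  by (intro coercive_compress_block[where f = "\<lambda>i. 1 + \<tau> + a / cluster_degree c a b i"])
    (simp add: Lsym_cluster_adj_shift_eq_block[symmetric] inner_psd_plus_scaled_id psd_Lsym_cluster_adj)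

end

lemma dplus_eq_cluster_degree: "dplus p \<eta> c i = cluster_degree c (p * (1 - \<eta>)) (p * \<eta>) i"
  by (simp add: dplus_def cluster_degree_def sfrac_def field_simps)

lemma dminus_eq_cluster_degree: "dminus p \<eta> c i = cluster_degree c (p * \<eta>) (p * (1 - \<eta>)) i"
  by (simp add: dminus_def cluster_degree_def sfrac_def field_simps)

lemma EAp_eq_cluster_adj: "EAp p \<eta> c = cluster_adj c (p * (1 - \<eta>)) (p * \<eta>)"
  by (simp add: EAp_def cluster_adj_def)

lemma EAm_eq_cluster_adj: "EAm p \<eta> c = cluster_adj c (p * \<eta>) (p * (1 - \<eta>))"
  by (simp add: EAm_def cluster_adj_def)

lemma Cplus_eq_cluster_core: "Cplus p \<eta> \<tau> c = cluster_core c (p * (1 - \<eta>)) (p * \<eta>) \<tau>"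
  by (simp add: Cplus_def cluster_core_def uplus_def dplus_eq_cluster_degree vec_eq_iff)
    (simp add: field_simps)

lemma Cminus_eq_cluster_core: "Cminus p \<eta> \<tau> c = cluster_core c (p * \<eta>) (p * (1 - \<eta>)) \<tau>"
  by (simp add: Cminus_def cluster_core_def uminus_def dminus_eq_cluster_degree vec_eq_iff)
    (simp add: field_simps)

theorem mainTheorem9:
  fixes c :: "'n::finite \<Rightarrow> 'k::finite"
    and p \<eta> \<tau>p \<tau>m :: real
    and v :: "nat \<Rightarrow> real^'n" and g :: "nat \<Rightarrow> 'k"
    and R \<Lambda> :: "real^'k^'k"
  assumes n2: "CARD('n) \<ge> 2" and k2: "CARD('k) \<ge> 2"
    and p: "0 < p" "p \<le> 1" and eta: "0 \<le> \<eta>" "\<eta> < 1/2"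
    and clusters_nonempty: "surj c"
    and tau: "\<tau>p > 0" "\<tau>m \<ge> 0"
    and dpos: "\<forall>i. dplus p \<eta> c i > 0 \<and> dminus p \<eta> c i > 0"
    and orthonormal: "\<forall>m < CARD('n) - CARD('k). \<forall>m' < CARD('n) - CARD('k).
                        v m \<bullet> v m' = (if m = m' then 1 else 0)"
    and span_perp: "span (v ` {..< CARD('n) - CARD('k)}) =
                      {x. \<forall>y \<in> span (columns (Theta c)). x \<bullet> y = 0}"
    and support: "\<forall>m < CARD('n) - CARD('k). \<forall>j. v m $ j \<noteq> 0 \<longrightarrow> c j = g m"
    and counts: "\<forall>i. card {m. m < CARD('n) - CARD('k) \<and> g m = i} = csize c i - 1"
    and R_orth: "orthogonal_matrix R"
    and Lambda_diag: "\<forall>i j. i \<noteq> j \<longrightarrow> \<Lambda> $ i $ j = 0"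
    and eig: "misqrt (Cminus p \<eta> \<tau>p c) ** Cplus p \<eta> \<tau>m c ** misqrt (Cminus p \<eta> \<tau>p c)
              = R ** \<Lambda> ** transpose R"
  shows "Tbar p \<eta> \<tau>p \<tau>m c =
           (Theta c ** R) ** \<Lambda> ** transpose (Theta c ** R)
           + (\<Sum>m < CARD('n) - CARD('k).
                (alphap p \<eta> \<tau>m c (g m) / alpham p \<eta> \<tau>p c (g m)) *\<^sub>R outer (v m) (v m))"
proof -
  interpret cluster_frame c v g "CARD('n) - CARD('k)"
    using clusters_nonempty orthonormal span_perp support by unfold_locales
  have deg_plus: "0 < cluster_degree c (p * (1 - \<eta>)) (p * \<eta>) i"
    and deg_minus: "0 < cluster_degree c (p * \<eta>) (p * (1 - \<eta>)) i" for i
    using dpos by (simp_all add: dplus_eq_cluster_degree dminus_eq_cluster_degree)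
  have plus: "Lsym (EAp p \<eta> c) + \<tau>m *\<^sub>R mat 1 = block (Cplus p \<eta> \<tau>m c) (alphap p \<eta> \<tau>m c)"
    using Lsym_cluster_adj_shift_eq_block[OF deg_plus]
    by (simp add: EAp_eq_cluster_adj Cplus_eq_cluster_core alphap_def[abs_def] dplus_eq_cluster_degree)
  have minus: "Lsym (EAm p \<eta> c) + \<tau>p *\<^sub>R mat 1 = block (Cminus p \<eta> \<tau>p c) (alpham p \<eta> \<tau>p c)"
    using Lsym_cluster_adj_shift_eq_block[OF deg_minus]
    by (simp add: EAm_eq_cluster_adj Cminus_eq_cluster_core alpham_def[abs_def] dminus_eq_cluster_degree)
  have coercive: "\<tau>p * (z \<bullet> z) \<le> z \<bullet> (Cminus p \<eta> \<tau>p c *v z)" for z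
    unfolding Cminus_eq_cluster_core using p eta deg_minus by (intro cluster_core_coercive) auto
  have Cminus: "transpose (Cminus p \<eta> \<tau>p c) = Cminus p \<eta> \<tau>p c" "psd_mat (Cminus p \<eta> \<tau>p c)"
      "invertible (Cminus p \<eta> \<tau>p c)"
    using psd_mat_if_coercive[OF _ coercive] invertible_if_coercive[OF _ coercive] tau(1)
    by (simp_all add: Cminus_eq_cluster_core transpose_cluster_core)
  have alpham_pos: "0 < alpham p \<eta> \<tau>p c i" for i
    using p eta tau deg_minus[of i] by (simp add: alpham_def dminus_eq_cluster_degree add_pos_nonneg)
  have "Tbar p \<eta> \<tau>p \<tau>m c
      = block (misqrt (Cminus p \<eta> \<tau>p c) ** Cplus p \<eta> \<tau>m c ** misqrt (Cminus p \<eta> \<tau>p c))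
              (\<lambda>i. alphap p \<eta> \<tau>m c i / alpham p \<eta> \<tau>p c i)"
    using alpham_pos
    by (simp add: Tbar_def plus minus misqrt_block[OF Cminus alpham_pos] block_mult less_imp_le)
  then show ?thesis
    unfolding eig block_def perp_diag_def by (simp add: matrix_transpose_mul matrix_mul_assoc)
qed

end
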